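(* Fix $K\ge 1$ classes, and for each class $k\in\{1,\dots,K\}$ a decomposable stratified graph $G_L^k$ on the feature set $\Delta$, with its clique and separator factor structures as described in the context. Fix a test data set $\mathbf{X}^T$ of $n$ observations and a labeling $T\in\{1,\dots,K\}^n$ of the test data. Let the training data grow, and suppose that for every class $k$, every clique $C\in\mathcal{C}(G_L^k)$ and every separator $S\in\mathcal{S}(G_L^k)$, and every index triple $(j,i,l)$ of the corresponding factor, the training count $m(x_j^i\mid\pi_j^l)$ computed from $\mathbf{X}^{R,k}$ tends to $\infty$ (so that every updated hyperparameter $\beta_{jil}=\alpha_{jil}+m(x_j^i\mid \pi_j^l)\to\infty$). This holds, for example, almost surely when the training data of each class are an i.i.d. sample of size tending to infinity from a distribution under which all these cells have strictly positive probability. Then \[ \log P_{\mathrm{sim}}(T\mid \mathbf{X}^T,\mathbf{X}^R,R,G_L^A)-\log P_{\mathrm{mar}}(T\mid \mathbf{X}^T,\mathbf{X}^R,R,G_L^A)\longrightarrow 0 . \] That is, the marginal and simultaneous predictive SGM classifiers are asymptotically equivalent as the size of the training data goes to infinity.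
   Context: All features $X_\delta$, $\delta\in\Delta$, are binary (more generally finite categorical, variable $X_j$ having $k_j$ outcomes). Stratified graphs. For an undirected graph $G=(\Delta,E)$ and an edge $\{\delta,\gamma\}\in E$, let $L_{\{\delta,\gamma\}}$ be the set of nodes adjacent to both $\delta$ and $\gamma$. A stratum of the edge is a set $\mathcal{L}_{\{\delta,\gamma\}}$ of outcomes $x_{L_{\{\delta,\gamma\}}}$ for which $X_\delta\perp X_\gamma\mid X_{L_{\{\delta,\gamma\}}}=x_{L_{\{\delta,\gamma\}}}$. A stratified graph (SG) $G_L$ is a pair $(G,L)$, where $L$ is the collection of strata attached to edges of $G$. It is decomposable if $G$ is decomposable (chordal), no stratified edge lies in a separator of $G$, and within each clique $C$ all stratified edges share at least one common node. Factor formula. For a clique $C$ (or separator $S$) with $d$ variables, order them $X_1,\dots,X_d$, where, if $C$ contains stratified edges, $X_d$ is a node common to all of them. For $j<d$, and for $j=d$ when there are no strata, the parent outcomes (outcomes of $X_1,\dots,X_{j-1}$) are each their own group. For $j=d$ with strata, the outcomes of $X_1,\dots,X_{d-1}$ are partitioned into $q_d$ groups: each outcome $x$ in the stratum of an edge $\{d',d\}$ merges the two parent outcomes that agree with $x$ on the common neighbours and differ only in $X_{d'}$, and groups are the resulting equivalence classes. Let $q_j$ be the number of groups for $X_j$. For a data matrix $\mathbf{Y}$ on the variables of $C$, let $n(\pi_j^l)$ be the number of rows whose parent outcome lies in group $l$, and $n(x_j^i\mid\pi_j^l)$ the number of those rows in which $X_j=i$. For positive hyperparameters $\beta_{jil}$,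 \[ P_C(\mathbf{Y})=\prod_{j=1}^{d}\prod_{l=1}^{q_j}\frac{\Gamma(\sum_{i=1}^{k_j}\beta_{jil})}{\Gamma(n(\pi_j^l)+\sum_{i=1}^{k_j}\beta_{jil})}\prod_{i=1}^{k_j}\frac{\Gamma(n(x_j^i\mid\pi_j^l)+\beta_{jil})}{\Gamma(\beta_{jil})}, \] and analogously for $P_S$. Predictive scores. Training data $\mathbf{X}^R$ consist of $m$ observations with class labels $R$, and $\mathbf{X}^{R,k}$ denotes the training data of class $k$. In the posterior predictive version $P_C(\cdot\mid \mathbf{X}^{R,k})$ one uses $\beta_{jil}=\alpha_{jil}+m(x_j^i\mid\pi_j^l)$, where $\alpha_{jil}>0$ are fixed prior hyperparameters and $m(x_j^i\mid\pi_j^l)$ is the corresponding count in $\mathbf{X}^{R,k}$. Write $G_L^A=(G_L^1,\dots,G_L^K)$. Let $\mathbf{X}_i^T$ be the $i$-th test observation, and $\mathbf{X}^{T,k}$ the test observations assigned to class $k$ by $T$. Subscripts $C$ and $S$ denote restriction to the variables in $C$ or $S$. Then \[ P_{\mathrm{mar}}(T\mid\cdot)=\prod_{i=1}^n\frac{\prod_{C\in\mathcal{C}(G_L^{T(i)})}P_C(\mathbf{X}^T_{i,C}\mid \mathbf{X}^{R,T(i)})}{\prod_{S\in\mathcal{S}(G_L^{T(i)})}P_S(\mathbf{X}^T_{i,S}\mid \mathbf{X}^{R,T(i)})},\qquad P_{\mathrm{sim}}(T\mid\cdot)=\prod_{k=1}^K\frac{\prod_{C\in\mathcal{C}(G_L^{k})}P_C(\mathbf{X}^{T,k}_{C}\mid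 \mathbf{X}^{R,k})}{\prod_{S\in\mathcal{S}(G_L^{k})}P_S(\mathbf{X}^{T,k}_{S}\mid \mathbf{X}^{R,k})}. \] The marginal, respectively simultaneous, classifier chooses the $T$ maximizing $P_{\mathrm{mar}}$, respectively $P_{\mathrm{sim}}$. *)

theory Defs
  imports "HOL-Analysis.Analysis"
begin

text \<open>Observations: an outcome for every variable; variable v has outcomes 0 ..< kk v.\<close>
type_synonym 'v obs = "'v \<Rightarrow> nat"

definition is_graph :: "'v set \<Rightarrow> 'v set set \<Rightarrow> bool" where
  "is_graph \<Delta> E \<longleftrightarrow> finite \<Delta> \<and> (\<forall>e\<in>E. \<exists>u v. u \<noteq> v \<and> u \<in> \<Delta> \<and> v \<in> \<Delta> \<and> e = {u, v})"

definition complete_set :: "'v set set \<Rightarrow> 'v set \<Rightarrow> bool" where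
  "complete_set E A \<longleftrightarrow> (\<forall>u\<in>A. \<forall>v\<in>A. u \<noteq> v \<longrightarrow> {u, v} \<in> E)"

definition max_cliques :: "'v set \<Rightarrow> 'v set set \<Rightarrow> 'v set set" where
  "max_cliques \<Delta> E = {A. A \<subseteq> \<Delta> \<and> A \<noteq> {} \<and> complete_set E A \<and>
                         (\<forall>B. A \<subset> B \<and> B \<subseteq> \<Delta> \<longrightarrow> \<not> complete_set E B)}"

definition chordless_cycle :: "'v set set \<Rightarrow> 'v list \<Rightarrow> bool" where
  "chordless_cycle E cyc \<longleftrightarrow> length cyc \<ge> 4 \<and> distinct cyc \<and>
     (\<forall>i<length cyc. \<forall>j<length cyc. i \<noteq> j \<longrightarrow>
        ({cyc ! i, cyc ! j} \<in> E \<longleftrightarrow>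
           (j = Suc i mod length cyc \<or> i = Suc j mod length cyc)))"

definition chordal :: "'v set set \<Rightarrow> bool" where
  "chordal E \<longleftrightarrow> \<not> (\<exists>cyc. chordless_cycle E cyc)"

definition perfect_seq :: "'v set \<Rightarrow> 'v set set \<Rightarrow> 'v set list \<Rightarrow> bool" where
  "perfect_seq \<Delta> E cs \<longleftrightarrow> distinct cs \<and> set cs = max_cliques \<Delta> E \<and>
     (\<forall>j. 0 < j \<and> j < length cs \<longrightarrow> (\<exists>i<j. cs ! j \<inter> \<Union> (set (take j cs)) \<subseteq> cs ! i))"

text \<open>The separators (as a list, i.e. with multiplicity) of a perfect sequence.\<close>
definition seps :: "'v set list \<Rightarrow> 'v set list" where
  "seps cs = map (\<lambda>j. cs ! j \<inter> \<Union> (set (take j cs))) [1..<length cs]"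

definition common_nbrs :: "'v set \<Rightarrow> 'v set set \<Rightarrow> 'v \<Rightarrow> 'v \<Rightarrow> 'v set" where
  "common_nbrs \<Delta> E u v = {w\<in>\<Delta>. {w, u} \<in> E \<and> {w, v} \<in> E}"

text \<open>Strata: Lst e is the stratum of edge e, a set of outcomes of the variables in
  the common neighbourhood of the edge (only the values on that set matter).\<close>
definition stratified_edge :: "'v set set \<Rightarrow> ('v set \<Rightarrow> 'v obs set) \<Rightarrow> 'v set \<Rightarrow> bool" where
  "stratified_edge E Lst e \<longleftrightarrow> e \<in> E \<and> Lst e \<noteq> {}"

definition is_SG :: "'v set \<Rightarrow> ('v \<Rightarrow> nat) \<Rightarrow> 'v set set \<Rightarrow> ('v set \<Rightarrow> 'v obs set) \<Rightarrow> bool" where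
  "is_SG \<Delta> kk E Lst \<longleftrightarrow> is_graph \<Delta> E \<and> (\<forall>e. Lst e \<noteq> {} \<longrightarrow> e \<in> E) \<and>
     (\<forall>u v. \<forall>x\<in>Lst {u, v}. \<forall>w\<in>common_nbrs \<Delta> E u v. x w < kk w)"

definition decomposable_SG :: "'v set \<Rightarrow> ('v \<Rightarrow> nat) \<Rightarrow> 'v set set \<Rightarrow> ('v set \<Rightarrow> 'v obs set) \<Rightarrow> bool" where
  "decomposable_SG \<Delta> kk E Lst \<longleftrightarrow> is_SG \<Delta> kk E Lst \<and> chordal E \<and>
     (\<forall>cs. perfect_seq \<Delta> E cs \<longrightarrow>
        (\<forall>S\<in>set (seps cs). \<forall>e. stratified_edge E Lst e \<longrightarrow> \<not> e \<subseteq> S)) \<and>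
     (\<forall>C\<in>max_cliques \<Delta> E. \<exists>v. \<forall>e. stratified_edge E Lst e \<and> e \<subseteq> C \<longrightarrow> v \<in> e)"

definition valid_order :: "'v set set \<Rightarrow> ('v set \<Rightarrow> 'v obs set) \<Rightarrow> 'v set \<Rightarrow> 'v list \<Rightarrow> bool" where
  "valid_order E Lst F vo \<longleftrightarrow> distinct vo \<and> set vo = F \<and>
     (\<forall>e. stratified_edge E Lst e \<and> e \<subseteq> F \<longrightarrow> last vo \<in> e)"

text \<open>Parent outcomes of the (0-based) j-th variable: outcomes of vo!0, ..., vo!(j-1).\<close>
definition par_space :: "('v \<Rightarrow> nat) \<Rightarrow> 'v list \<Rightarrow> nat \<Rightarrow> nat list set" where
  "par_space kk vo j = {xs. length xs = j \<and> (\<forall>t<j. xs ! t < kk (vo ! t))}"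

definition parent :: "'v obs \<Rightarrow> 'v list \<Rightarrow> nat \<Rightarrow> nat list" where
  "parent y vo j = map y (take j vo)"

text \<open>Merging of parent outcomes of the last variable induced by the strata.\<close>
definition merge_rel :: "'v set \<Rightarrow> 'v set set \<Rightarrow> ('v set \<Rightarrow> 'v obs set) \<Rightarrow> ('v \<Rightarrow> nat) \<Rightarrow>
    'v list \<Rightarrow> (nat list \<times> nat list) set" where
  "merge_rel \<Delta> E Lst kk vo =
    {(ys, zs). ys \<in> par_space kk vo (length vo - 1) \<and> zs \<in> par_space kk vo (length vo - 1) \<and>
      (\<exists>t < length vo - 1. \<exists>x\<in>Lst {vo ! t, last vo}.
         (\<forall>s < length vo - 1. vo ! s \<in> common_nbrs \<Delta> E (vo ! t) (last vo) \<longrightarrow> ys ! s = x (vo ! s)) \<and>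
         (\<forall>s < length vo - 1. s \<noteq> t \<longrightarrow> ys ! s = zs ! s) \<and> ys ! t \<noteq> zs ! t)}"

definition groups :: "'v set \<Rightarrow> 'v set set \<Rightarrow> ('v set \<Rightarrow> 'v obs set) \<Rightarrow> ('v \<Rightarrow> nat) \<Rightarrow>
    'v list \<Rightarrow> nat \<Rightarrow> nat list set set" where
  "groups \<Delta> E Lst kk vo j =
     par_space kk vo j //
       (if Suc j = length vo then (merge_rel \<Delta> E Lst kk vo \<union> (merge_rel \<Delta> E Lst kk vo)\<inverse>)\<^sup>* else Id)"

definition cnt :: "'v list \<Rightarrow> nat \<Rightarrow> 'v obs list \<Rightarrow> nat list set \<Rightarrow> nat" where
  "cnt vo j Ys Q = length (filter (\<lambda>y. parent y vo j \<in> Q) Ys)"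

definition cnti :: "'v list \<Rightarrow> nat \<Rightarrow> 'v obs list \<Rightarrow> nat \<Rightarrow> nat list set \<Rightarrow> nat" where
  "cnti vo j Ys i Q = length (filter (\<lambda>y. parent y vo j \<in> Q \<and> y (vo ! j) = i) Ys)"

text \<open>P_F(Y) with hyperparameters beta j i Q (j 0-based variable index, i outcome, Q group).\<close>
definition factor_prob :: "'v set \<Rightarrow> 'v set set \<Rightarrow> ('v set \<Rightarrow> 'v obs set) \<Rightarrow> ('v \<Rightarrow> nat) \<Rightarrow>
    'v list \<Rightarrow> (nat \<Rightarrow> nat \<Rightarrow> nat list set \<Rightarrow> real) \<Rightarrow> 'v obs list \<Rightarrow> real" where
  "factor_prob \<Delta> E Lst kk vo \<beta> Ys =
     (\<Prod>j<length vo. \<Prod>Q\<in>groups \<Delta> E Lst kk vo j.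
        Gamma (\<Sum>i<kk (vo ! j). \<beta> j i Q) / Gamma (real (cnt vo j Ys Q) + (\<Sum>i<kk (vo ! j). \<beta> j i Q)) *
        (\<Prod>i<kk (vo ! j). Gamma (real (cnti vo j Ys i Q) + \<beta> j i Q) / Gamma (\<beta> j i Q)))"

definition pred_factor :: "'v set \<Rightarrow> 'v set set \<Rightarrow> ('v set \<Rightarrow> 'v obs set) \<Rightarrow> ('v \<Rightarrow> nat) \<Rightarrow>
    'v list \<Rightarrow> (nat \<Rightarrow> nat \<Rightarrow> nat list set \<Rightarrow> real) \<Rightarrow> 'v obs list \<Rightarrow> 'v obs list \<Rightarrow> real" where
  "pred_factor \<Delta> E Lst kk vo \<alpha> Dtr Ys =
     factor_prob \<Delta> E Lst kk vo (\<lambda>j i Q. \<alpha> j i Q + real (cnti vo j Dtr i Q)) Ys"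

definition class_score :: "'v set \<Rightarrow> ('v \<Rightarrow> nat) \<Rightarrow> 'v set set \<Rightarrow> ('v set \<Rightarrow> 'v obs set) \<Rightarrow>
    'v set list \<Rightarrow> ('v set \<Rightarrow> 'v list) \<Rightarrow> ('v set \<Rightarrow> nat \<Rightarrow> nat \<Rightarrow> nat list set \<Rightarrow> real) \<Rightarrow>
    'v obs list \<Rightarrow> 'v obs list \<Rightarrow> real" where
  "class_score \<Delta> kk E Lst cs ord \<alpha> Dtr Ys =
     prod_list (map (\<lambda>C. pred_factor \<Delta> E Lst kk (ord C) (\<alpha> C) Dtr Ys) cs) /
     prod_list (map (\<lambda>S. pred_factor \<Delta> E Lst kk (ord S) (\<alpha> S) Dtr Ys) (seps cs))"

definition class_data :: "('v obs \<times> nat) list \<Rightarrow> nat \<Rightarrow> 'v obs list" where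
  "class_data D k = map fst (filter (\<lambda>p. snd p = k) D)"

definition P_mar where
  "P_mar \<Delta> kk E Lst cs ord \<alpha> XR XT T =
     (\<Prod>i<length XT. class_score \<Delta> kk (E (T ! i)) (Lst (T ! i)) (cs (T ! i)) (ord (T ! i))
                         (\<alpha> (T ! i)) (class_data XR (T ! i)) [XT ! i])"

definition P_sim where
  "P_sim K \<Delta> kk E Lst cs ord \<alpha> XR XT T =
     (\<Prod>k\<in>{1..K}. class_score \<Delta> kk (E k) (Lst k) (cs k) (ord k) (\<alpha> k)
                         (class_data XR k) (class_data (zip XT T) k))"

end

theory Submission
  imports Defs
begin

text \<open>
  Every factor P_F(Y | training data) is a product, over variables j and parent groups Q,
  of Dirichlet-multinomial blocks Gamma(B)/Gamma(n + B) * prod_i Gamma(c_i + b_i)/Gamma(b_i).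
  Writing ln Gamma(c + x) - ln Gamma(x) = c ln x + lgamma_rem c x, where the remainder
  lgamma_rem c x tends to 0 as x tends to infinity, the logarithm of each factor splits
  into a log-linear part, which is a sum over the test observations (additive under
  concatenation of data sets), and a remainder that vanishes when all posterior
  hyperparameters tend to infinity.  The same splitting holds for the class score
  (cliques over separators).  Since the log-linear part is additive, it contributes the
  same amount to ln P_sim (test data grouped by class) and to ln P_mar (observations one
  at a time); hence ln P_sim - ln P_mar is a finite combination of remainders and tends to 0.
\<close>

definition lgamma_rem :: "nat \<Rightarrow> real \<Rightarrow> real" where
  "lgamma_rem n x = ln (Gamma (real n + x)) - ln (Gamma x) - real n * ln x"

text \<open>ln(c + x) - ln x = ln(1 + c/x) tends to 0: one step of the remainder estimate.\<close>
lemma ln_shift_tendsto: "((\<lambda>x::real. ln (c + x) - ln x) \<longlongrightarrow> 0) at_top"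
proof -
  have "((\<lambda>x::real. ln (1 + c / x)) \<longlongrightarrow> ln (1 + 0)) at_top"
    by (intro tendsto_ln tendsto_add tendsto_const tendsto_divide_0[OF tendsto_const]
          filterlim_at_top_imp_at_infinity filterlim_ident) simp_all
  moreover have "\<forall>\<^sub>F x in at_top. ln (1 + c / x) = ln (c + x) - ln (x::real)"
    using eventually_gt_at_top[of "max 0 (- c)"]
  proof eventually_elim
    case (elim x)
    then have "1 + c / x = (c + x) / x" "0 < x" "0 < c + x" by (auto simp: field_simps)
    then show ?case by (simp add: ln_div)
  qed
  ultimately show ?thesis by (simp add: tendsto_cong)
qed

text \<open>The functional equation of Gamma turns the remainder into a telescoping sum.\<close>
lemma lgamma_rem_Suc:
  assumes "0 < x"
  shows "lgamma_rem (Suc n) x = lgamma_rem n x + (ln (real n + x) - ln x)"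
proof -
  have pos: "0 < real n + x" using assms by simp
  have "real n + x \<notin> \<int>\<^sub>\<le>\<^sub>0" using pos by (auto dest: nonpos_Ints_nonpos)
  then have "Gamma (real (Suc n) + x) = (real n + x) * Gamma (real n + x)"
    using Gamma_plus1[of "real n + x"] by (simp add: add_ac)
  then have "ln (Gamma (real (Suc n) + x)) = ln (real n + x) + ln (Gamma (real n + x))"
    using pos by (simp add: ln_mult_pos)
  then show ?thesis unfolding lgamma_rem_def by (simp add: algebra_simps)
qed

lemma lgamma_rem_tendsto: "(lgamma_rem n \<longlongrightarrow> 0) at_top"
proof (induction n)
  case 0
  then show ?case by (simp add: lgamma_rem_def)
next
  case (Suc n)
  have "((\<lambda>x. lgamma_rem n x + (ln (real n + x) - ln x)) \<longlongrightarrow> 0 + 0) at_top"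
    by (intro tendsto_add Suc ln_shift_tendsto)
  moreover have "\<forall>\<^sub>F x in at_top. lgamma_rem n x + (ln (real n + x) - ln x) = lgamma_rem (Suc n) x"
    using eventually_gt_at_top[of 0] by eventually_elim (simp add: lgamma_rem_Suc)
  ultimately show ?case by (simp add: tendsto_cong)
qed

lemma ln_Gamma_ratio:
  assumes "0 < x"
  shows "0 < Gamma (real n + x) / Gamma x"
    and "ln (Gamma (real n + x) / Gamma x) = real n * ln x + lgamma_rem n x"
proof -
  have "0 < Gamma x" "0 < Gamma (real n + x)" using assms by simp_all
  then show "0 < Gamma (real n + x) / Gamma x"
    and "ln (Gamma (real n + x) / Gamma x) = real n * ln x + lgamma_rem n x"
    by (simp_all add: lgamma_rem_def ln_div)
qed

text \<open>Logarithm of a product of positive reals (also for infinite index sets,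
  where both sides are 0).\<close>
lemma ln_prod_pos:
  assumes "\<And>i. i \<in> I \<Longrightarrow> 0 < (f i :: real)"
  shows "ln (prod f I) = (\<Sum>i\<in>I. ln (f i))"
  using ln_prod[of I f] assms by (cases "finite I") force+

lemma ln_dirichlet_block:
  fixes \<beta> :: "'i \<Rightarrow> real" and c :: "'i \<Rightarrow> nat"
  assumes "finite I" "I \<noteq> {}" and pos: "\<And>i. i \<in> I \<Longrightarrow> 0 < \<beta> i"
  defines "B \<equiv> \<Sum>i\<in>I. \<beta> i"
  shows "0 < Gamma B / Gamma (real n + B) * (\<Prod>i\<in>I. Gamma (real (c i) + \<beta> i) / Gamma (\<beta> i))"
    and "ln (Gamma B / Gamma (real n + B) * (\<Prod>i\<in>I. Gamma (real (c i) + \<beta> i) / Gamma (\<beta> i)))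
        = ((\<Sum>i\<in>I. real (c i) * ln (\<beta> i)) - real n * ln B)
          + ((\<Sum>i\<in>I. lgamma_rem (c i) (\<beta> i)) - lgamma_rem n B)"
proof -
  have B: "0 < B" unfolding B_def using assms by (intro sum_pos) auto
  have front: "0 < Gamma B / Gamma (real n + B)"
    "ln (Gamma B / Gamma (real n + B)) = - (real n * ln B + lgamma_rem n B)"
    using ln_Gamma_ratio[OF B, of n] B by (auto simp: ln_div add_nonneg_pos)
  have ratio_pos: "\<And>i. i \<in> I \<Longrightarrow> 0 < Gamma (real (c i) + \<beta> i) / Gamma (\<beta> i)"
    using ln_Gamma_ratio(1) pos by blast
  then have terms: "0 < (\<Prod>i\<in>I. Gamma (real (c i) + \<beta> i) / Gamma (\<beta> i))"
    by (rule prod_pos)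
  have "ln (\<Prod>i\<in>I. Gamma (real (c i) + \<beta> i) / Gamma (\<beta> i))
      = (\<Sum>i\<in>I. ln (Gamma (real (c i) + \<beta> i) / Gamma (\<beta> i)))"
    using ratio_pos by (rule ln_prod_pos)
  also have "\<dots> = (\<Sum>i\<in>I. real (c i) * ln (\<beta> i) + lgamma_rem (c i) (\<beta> i))"
    using ln_Gamma_ratio(2) pos by (intro sum.cong) auto
  finally have ln_terms: "ln (\<Prod>i\<in>I. Gamma (real (c i) + \<beta> i) / Gamma (\<beta> i))
      = (\<Sum>i\<in>I. real (c i) * ln (\<beta> i) + lgamma_rem (c i) (\<beta> i))" .
  show "0 < Gamma B / Gamma (real n + B) * (\<Prod>i\<in>I. Gamma (real (c i) + \<beta> i) / Gamma (\<beta> i))"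
    using front(1) terms by (rule mult_pos_pos)
  show "ln (Gamma B / Gamma (real n + B) * (\<Prod>i\<in>I. Gamma (real (c i) + \<beta> i) / Gamma (\<beta> i)))
        = ((\<Sum>i\<in>I. real (c i) * ln (\<beta> i)) - real n * ln B)
          + ((\<Sum>i\<in>I. lgamma_rem (c i) (\<beta> i)) - lgamma_rem n B)"
    unfolding ln_mult_pos[OF front(1) terms] front(2) ln_terms sum.distrib by simp
qed

definition factor_loglin :: "'v set \<Rightarrow> 'v set set \<Rightarrow> ('v set \<Rightarrow> 'v obs set) \<Rightarrow> ('v \<Rightarrow> nat) \<Rightarrow>
    'v list \<Rightarrow> (nat \<Rightarrow> nat \<Rightarrow> nat list set \<Rightarrow> real) \<Rightarrow> 'v obs list \<Rightarrow> real" where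
  "factor_loglin \<Delta> E Lst kk vo \<beta> Ys =
     (\<Sum>j<length vo. \<Sum>Q\<in>groups \<Delta> E Lst kk vo j.
        (\<Sum>i<kk (vo ! j). real (cnti vo j Ys i Q) * ln (\<beta> j i Q))
        - real (cnt vo j Ys Q) * ln (\<Sum>i<kk (vo ! j). \<beta> j i Q))"

definition factor_rem :: "'v set \<Rightarrow> 'v set set \<Rightarrow> ('v set \<Rightarrow> 'v obs set) \<Rightarrow> ('v \<Rightarrow> nat) \<Rightarrow>
    'v list \<Rightarrow> (nat \<Rightarrow> nat \<Rightarrow> nat list set \<Rightarrow> real) \<Rightarrow> 'v obs list \<Rightarrow> real" where
  "factor_rem \<Delta> E Lst kk vo \<beta> Ys =
     (\<Sum>j<length vo. \<Sum>Q\<in>groups \<Delta> E Lst kk vo j.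
        (\<Sum>i<kk (vo ! j). lgamma_rem (cnti vo j Ys i Q) (\<beta> j i Q))
        - lgamma_rem (cnt vo j Ys Q) (\<Sum>i<kk (vo ! j). \<beta> j i Q))"

text \<open>Counts are additive in the data, hence so is the log-linear part.\<close>
lemma factor_loglin_Nil: "factor_loglin \<Delta> E Lst kk vo \<beta> [] = 0"
  by (simp add: factor_loglin_def cnti_def cnt_def)

lemma factor_loglin_append:
  "factor_loglin \<Delta> E Lst kk vo \<beta> (Ys @ Zs) = factor_loglin \<Delta> E Lst kk vo \<beta> Ys + factor_loglin \<Delta> E Lst kk vo \<beta> Zs"
  by (simp add: factor_loglin_def cnti_def cnt_def sum.distrib[symmetric] algebra_simps)

lemma ln_factor_prob:
  assumes kpos: "\<And>j. j < length vo \<Longrightarrow> 0 < kk (vo ! j)"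
    and pos: "\<And>j i Q. j < length vo \<Longrightarrow> i < kk (vo ! j) \<Longrightarrow> Q \<in> groups \<Delta> E Lst kk vo j \<Longrightarrow> 0 < \<beta> j i Q"
  shows "0 < factor_prob \<Delta> E Lst kk vo \<beta> Ys"
    and "ln (factor_prob \<Delta> E Lst kk vo \<beta> Ys)
         = factor_loglin \<Delta> E Lst kk vo \<beta> Ys + factor_rem \<Delta> E Lst kk vo \<beta> Ys"
proof -
  let ?G = "groups \<Delta> E Lst kk vo"
  define block where "block j Q =
    Gamma (\<Sum>i<kk (vo ! j). \<beta> j i Q) / Gamma (real (cnt vo j Ys Q) + (\<Sum>i<kk (vo ! j). \<beta> j i Q)) *
    (\<Prod>i<kk (vo ! j). Gamma (real (cnti vo j Ys i Q) + \<beta> j i Q) / Gamma (\<beta> j i Q))" for j Q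
  have block_pos: "0 < block j Q" if "j < length vo" "Q \<in> ?G j" for j Q
    unfolding block_def using kpos[OF that(1)] pos that by (intro ln_dirichlet_block(1)) auto
  have ln_block: "ln (block j Q) =
      ((\<Sum>i<kk (vo ! j). real (cnti vo j Ys i Q) * ln (\<beta> j i Q)) - real (cnt vo j Ys Q) * ln (\<Sum>i<kk (vo ! j). \<beta> j i Q))
    + ((\<Sum>i<kk (vo ! j). lgamma_rem (cnti vo j Ys i Q) (\<beta> j i Q)) - lgamma_rem (cnt vo j Ys Q) (\<Sum>i<kk (vo ! j). \<beta> j i Q))"
    if "j < length vo" "Q \<in> ?G j" for j Q
    unfolding block_def using kpos[OF that(1)] pos that by (intro ln_dirichlet_block(2)) auto
  have fp: "factor_prob \<Delta> E Lst kk vo \<beta> Ys = (\<Prod>j<length vo. \<Prod>Q\<in>?G j. block j Q)"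
    unfolding factor_prob_def block_def ..
  show "0 < factor_prob \<Delta> E Lst kk vo \<beta> Ys"
    unfolding fp using block_pos by (auto intro!: prod_pos)
  have "ln (factor_prob \<Delta> E Lst kk vo \<beta> Ys) = (\<Sum>j<length vo. ln (\<Prod>Q\<in>?G j. block j Q))"
    unfolding fp using block_pos by (intro ln_prod_pos prod_pos) auto
  also have "\<dots> = (\<Sum>j<length vo. \<Sum>Q\<in>?G j. ln (block j Q))"
    using block_pos by (intro sum.cong refl ln_prod_pos) auto
  finally show "ln (factor_prob \<Delta> E Lst kk vo \<beta> Ys)
         = factor_loglin \<Delta> E Lst kk vo \<beta> Ys + factor_rem \<Delta> E Lst kk vo \<beta> Ys"
    unfolding factor_loglin_def factor_rem_def sum.distrib[symmetric] by (simp add: ln_block)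
qed

text \<open>The remainder of a factor vanishes when all hyperparameters tend to infinity
  (their sums over outcomes then tend to infinity too).\<close>
lemma factor_rem_tendsto:
  assumes kpos: "\<And>j. j < length vo \<Longrightarrow> 0 < kk (vo ! j)"
    and pos: "\<And>N j i Q. j < length vo \<Longrightarrow> i < kk (vo ! j) \<Longrightarrow> Q \<in> groups \<Delta> E Lst kk vo j \<Longrightarrow> 0 < \<beta> N j i Q"
    and lim: "\<And>j i Q. j < length vo \<Longrightarrow> i < kk (vo ! j) \<Longrightarrow> Q \<in> groups \<Delta> E Lst kk vo j \<Longrightarrow>
               filterlim (\<lambda>N. \<beta> N j i Q) at_top sequentially"
  shows "(\<lambda>N. factor_rem \<Delta> E Lst kk vo (\<beta> N) Ys) \<longlonglongrightarrow> 0"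
proof -
  let ?G = "groups \<Delta> E Lst kk vo"
  have sum_lim: "filterlim (\<lambda>N. \<Sum>i<kk (vo ! j). \<beta> N j i Q) at_top sequentially"
    if "j < length vo" "Q \<in> ?G j" for j Q
  proof (rule filterlim_at_top_mono[OF lim[of j 0 Q]])
    show "\<forall>\<^sub>F N in sequentially. \<beta> N j 0 Q \<le> (\<Sum>i<kk (vo ! j). \<beta> N j i Q)"
      using that kpos pos by (intro always_eventually allI member_le_sum) (auto intro: less_imp_le)
  qed (use that kpos in auto)
  have rem_lim: "(\<lambda>N. lgamma_rem n (f N)) \<longlonglongrightarrow> 0" if "filterlim f at_top sequentially" for n f
    using filterlim_compose[OF lgamma_rem_tendsto that] by simp
  have "(\<lambda>N. factor_rem \<Delta> E Lst kk vo (\<beta> N) Ys) \<longlonglongrightarrow> (\<Sum>j<length vo. \<Sum>Q\<in>?G j. (\<Sum>i<kk (vo ! j). 0) - 0)"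
    unfolding factor_rem_def by (intro tendsto_sum tendsto_diff rem_lim lim sum_lim) auto
  then show ?thesis by simp
qed

lemma ln_prod_list:
  assumes "\<And>x. x \<in> set xs \<Longrightarrow> 0 < (f x :: real)"
  shows "0 < prod_list (map f xs)" and "ln (prod_list (map f xs)) = sum_list (map (\<lambda>x. ln (f x)) xs)"
  using assms by (induction xs) (auto simp: ln_mult_pos)

lemma tendsto_sum_list_null:
  assumes "\<And>x. x \<in> set xs \<Longrightarrow> (\<lambda>N. f x N :: real) \<longlonglongrightarrow> 0"
  shows "(\<lambda>N. sum_list (map (\<lambda>x. f x N) xs)) \<longlonglongrightarrow> 0"
  using assms by (induction xs) (auto intro: tendsto_add_zero)

definition post_hyper :: "'v list \<Rightarrow> (nat \<Rightarrow> nat \<Rightarrow> nat list set \<Rightarrow> real) \<Rightarrow> 'v obs list \<Rightarrow>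
    nat \<Rightarrow> nat \<Rightarrow> nat list set \<Rightarrow> real" where
  "post_hyper vo \<alpha> Dtr j i Q = \<alpha> j i Q + real (cnti vo j Dtr i Q)"

definition class_loglin :: "'v set \<Rightarrow> ('v \<Rightarrow> nat) \<Rightarrow> 'v set set \<Rightarrow> ('v set \<Rightarrow> 'v obs set) \<Rightarrow>
    'v set list \<Rightarrow> ('v set \<Rightarrow> 'v list) \<Rightarrow> ('v set \<Rightarrow> nat \<Rightarrow> nat \<Rightarrow> nat list set \<Rightarrow> real) \<Rightarrow>
    'v obs list \<Rightarrow> 'v obs list \<Rightarrow> real" where
  "class_loglin \<Delta> kk E Lst cs ord \<alpha> Dtr Ys =
     sum_list (map (\<lambda>C. factor_loglin \<Delta> E Lst kk (ord C) (post_hyper (ord C) (\<alpha> C) Dtr) Ys) cs) -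
     sum_list (map (\<lambda>S. factor_loglin \<Delta> E Lst kk (ord S) (post_hyper (ord S) (\<alpha> S) Dtr) Ys) (seps cs))"

definition class_rem :: "'v set \<Rightarrow> ('v \<Rightarrow> nat) \<Rightarrow> 'v set set \<Rightarrow> ('v set \<Rightarrow> 'v obs set) \<Rightarrow>
    'v set list \<Rightarrow> ('v set \<Rightarrow> 'v list) \<Rightarrow> ('v set \<Rightarrow> nat \<Rightarrow> nat \<Rightarrow> nat list set \<Rightarrow> real) \<Rightarrow>
    'v obs list \<Rightarrow> 'v obs list \<Rightarrow> real" where
  "class_rem \<Delta> kk E Lst cs ord \<alpha> Dtr Ys =
     sum_list (map (\<lambda>C. factor_rem \<Delta> E Lst kk (ord C) (post_hyper (ord C) (\<alpha> C) Dtr) Ys) cs) -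
     sum_list (map (\<lambda>S. factor_rem \<Delta> E Lst kk (ord S) (post_hyper (ord S) (\<alpha> S) Dtr) Ys) (seps cs))"

lemma class_loglin_Nil: "class_loglin \<Delta> kk E Lst cs ord \<alpha> Dtr [] = 0"
  by (simp add: class_loglin_def factor_loglin_Nil)

lemma class_loglin_append:
  "class_loglin \<Delta> kk E Lst cs ord \<alpha> Dtr (Ys @ Zs) =
   class_loglin \<Delta> kk E Lst cs ord \<alpha> Dtr Ys + class_loglin \<Delta> kk E Lst cs ord \<alpha> Dtr Zs"
  by (simp add: class_loglin_def factor_loglin_append sum_list_addf)

lemma ln_class_score:
  assumes kpos: "\<forall>F\<in>set cs \<union> set (seps cs). \<forall>j<length (ord F). 0 < kk (ord F ! j)"
    and apos: "\<forall>F\<in>set cs \<union> set (seps cs). \<forall>j<length (ord F). \<forall>i<kk (ord F ! j).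
                 \<forall>Q\<in>groups \<Delta> E Lst kk (ord F) j. 0 < \<alpha> F j i Q"
  shows "0 < class_score \<Delta> kk E Lst cs ord \<alpha> Dtr Ys"
    and "ln (class_score \<Delta> kk E Lst cs ord \<alpha> Dtr Ys) =
         class_loglin \<Delta> kk E Lst cs ord \<alpha> Dtr Ys + class_rem \<Delta> kk E Lst cs ord \<alpha> Dtr Ys"
proof -
  define pf where "pf F = pred_factor \<Delta> E Lst kk (ord F) (\<alpha> F) Dtr Ys" for F
  have pf_eq: "pf F = factor_prob \<Delta> E Lst kk (ord F) (post_hyper (ord F) (\<alpha> F) Dtr) Ys" for F
    unfolding pf_def pred_factor_def post_hyper_def ..
  have pf: "0 < pf F" "ln (pf F) =
      factor_loglin \<Delta> E Lst kk (ord F) (post_hyper (ord F) (\<alpha> F) Dtr) Ys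
      + factor_rem \<Delta> E Lst kk (ord F) (post_hyper (ord F) (\<alpha> F) Dtr) Ys"
    if "F \<in> set cs \<union> set (seps cs)" for F
    unfolding pf_eq using kpos apos that
    by (auto intro!: ln_factor_prob add_pos_nonneg simp: post_hyper_def)
  have score: "class_score \<Delta> kk E Lst cs ord \<alpha> Dtr Ys =
      prod_list (map pf cs) / prod_list (map pf (seps cs))"
    unfolding class_score_def pf_def ..
  have num: "0 < prod_list (map pf cs)" "ln (prod_list (map pf cs)) = sum_list (map (\<lambda>F. ln (pf F)) cs)"
    using pf(1) by (auto intro!: ln_prod_list)
  have den: "0 < prod_list (map pf (seps cs))"
      "ln (prod_list (map pf (seps cs))) = sum_list (map (\<lambda>F. ln (pf F)) (seps cs))"
    using pf(1) by (auto intro!: ln_prod_list)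
  show "0 < class_score \<Delta> kk E Lst cs ord \<alpha> Dtr Ys"
    unfolding score using num den by simp
  show "ln (class_score \<Delta> kk E Lst cs ord \<alpha> Dtr Ys) =
         class_loglin \<Delta> kk E Lst cs ord \<alpha> Dtr Ys + class_rem \<Delta> kk E Lst cs ord \<alpha> Dtr Ys"
    unfolding score ln_divide_pos[OF num(1) den(1)] num(2) den(2) class_loglin_def class_rem_def
    using pf(2) by (simp add: sum_list_addf cong: map_cong)
qed

lemma class_rem_tendsto:
  assumes kpos: "\<forall>F\<in>set cs \<union> set (seps cs). \<forall>j<length (ord F). 0 < kk (ord F ! j)"
    and apos: "\<forall>F\<in>set cs \<union> set (seps cs). \<forall>j<length (ord F). \<forall>i<kk (ord F ! j).
                 \<forall>Q\<in>groups \<Delta> E Lst kk (ord F) j. 0 < \<alpha> F j i Q"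
    and lim: "\<forall>F\<in>set cs \<union> set (seps cs). \<forall>j<length (ord F). \<forall>i<kk (ord F ! j).
                 \<forall>Q\<in>groups \<Delta> E Lst kk (ord F) j. filterlim (\<lambda>N. cnti (ord F) j (D N) i Q) at_top sequentially"
  shows "(\<lambda>N. class_rem \<Delta> kk E Lst cs ord \<alpha> (D N) Ys) \<longlonglongrightarrow> 0"
proof -
  have "(\<lambda>N. factor_rem \<Delta> E Lst kk (ord F) (post_hyper (ord F) (\<alpha> F) (D N)) Ys) \<longlonglongrightarrow> 0"
    if F: "F \<in> set cs \<union> set (seps cs)" for F
  proof (rule factor_rem_tendsto)
    fix j i Q assume "j < length (ord F)" "i < kk (ord F ! j)" "Q \<in> groups \<Delta> E Lst kk (ord F) j"
    then have "0 < \<alpha> F j i Q"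
      and "filterlim (\<lambda>N. real (cnti (ord F) j (D N) i Q)) at_top sequentially"
      using apos lim F by (auto intro: filterlim_compose[OF filterlim_real_sequentially])
    then show "filterlim (\<lambda>N. post_hyper (ord F) (\<alpha> F) (D N) j i Q) at_top sequentially"
      unfolding post_hyper_def by (intro filterlim_tendsto_add_at_top[OF tendsto_const])
  qed (use kpos apos F in \<open>auto intro!: add_pos_nonneg simp: post_hyper_def\<close>)
  then have "(\<lambda>N. class_rem \<Delta> kk E Lst cs ord \<alpha> (D N) Ys) \<longlonglongrightarrow> 0 - 0"
    unfolding class_rem_def by (intro tendsto_diff tendsto_sum_list_null) auto
  then show ?thesis by simp
qed

lemma factor_subset:
  assumes "perfect_seq \<Delta> E cs" and "F \<in> set cs \<union> set (seps cs)"
  shows "F \<subseteq> \<Delta>"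
proof -
  have cliques: "C \<subseteq> \<Delta>" if "C \<in> set cs" for C
    using assms(1) that unfolding perfect_seq_def max_cliques_def by auto
  show ?thesis
  proof (cases "F \<in> set cs")
    case False
    then obtain j where "j < length cs" "F = cs ! j \<inter> \<Union> (set (take j cs))"
      using assms(2) unfolding seps_def by auto
    then show ?thesis using cliques[of "cs ! j"] by auto
  qed (rule cliques)
qed

lemma factor_outcomes_pos:
  assumes "\<forall>v\<in>\<Delta>. 0 < kk v" and "perfect_seq \<Delta> E cs"
    and "\<forall>F\<in>set cs \<union> set (seps cs). valid_order E Lst F (ord F)"
  shows "\<forall>F\<in>set cs \<union> set (seps cs). \<forall>j<length (ord F). 0 < kk (ord F ! j)"
proof (intro ballI allI impI)
  fix F j assume F: "F \<in> set cs \<union> set (seps cs)" and j: "j < length (ord F)"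
  have "set (ord F) = F" using assms(3) F unfolding valid_order_def by blast
  moreover have "F \<subseteq> \<Delta>" using assms(2) F by (rule factor_subset)
  ultimately show "0 < kk (ord F ! j)" using assms(1) nth_mem[OF j] by auto
qed

lemma class_split:
  fixes h :: "nat \<Rightarrow> 'v obs list \<Rightarrow> real"
  assumes "length T = length XT" and "\<forall>t\<in>set T. t \<in> {1..K}"
    and nil: "\<And>k. h k [] = 0" and app: "\<And>k Ys Zs. h k (Ys @ Zs) = h k Ys + h k Zs"
  shows "(\<Sum>k\<in>{1..K}. h k (class_data (zip XT T) k)) = (\<Sum>i<length XT. h (T ! i) [XT ! i])"
  using assms(1)[symmetric] assms(2)
proof (induction XT T rule: list_induct2)
  case Nil
  then show ?case by (simp add: class_data_def nil)
next
  case (Cons x xs t ts)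
  have "h k (class_data (zip (x # xs) (t # ts)) k)
      = (if k = t then h k [x] else 0) + h k (class_data (zip xs ts) k)" for k
  proof -
    have "class_data (zip (x # xs) (t # ts)) k = (if k = t then [x] else []) @ class_data (zip xs ts) k"
      by (simp add: class_data_def)
    then show ?thesis by (simp only: app) (simp add: nil)
  qed
  then have "(\<Sum>k\<in>{1..K}. h k (class_data (zip (x # xs) (t # ts)) k))
      = h t [x] + (\<Sum>k\<in>{1..K}. h k (class_data (zip xs ts) k))"
    using Cons.prems by (simp add: sum.distrib)
  also have "\<dots> = (\<Sum>i<length (x # xs). h ((t # ts) ! i) [(x # xs) ! i])"
    using Cons by (simp add: sum.lessThan_Suc_shift del: sum.lessThan_Suc)
  finally show ?case .
qed

lemma ln_sim_minus_mar:
  fixes s L R :: "nat \<Rightarrow> 'v obs list \<Rightarrow> real"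
  assumes "length T = length XT" and labels: "\<forall>t\<in>set T. t \<in> {1..K}"
    and s: "\<And>k Ys. k \<in> {1..K} \<Longrightarrow> 0 < s k Ys \<and> ln (s k Ys) = L k Ys + R k Ys"
    and nil: "\<And>k. L k [] = 0" and app: "\<And>k Ys Zs. L k (Ys @ Zs) = L k Ys + L k Zs"
  shows "ln (\<Prod>k\<in>{1..K}. s k (class_data (zip XT T) k)) - ln (\<Prod>i<length XT. s (T ! i) [XT ! i])
       = (\<Sum>k\<in>{1..K}. R k (class_data (zip XT T) k)) - (\<Sum>i<length XT. R (T ! i) [XT ! i])"
proof -
  have T: "T ! i \<in> {1..K}" if "i < length XT" for i
    using assms(1) labels that by (metis nth_mem)
  have "ln (\<Prod>k\<in>{1..K}. s k (class_data (zip XT T) k))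
      = (\<Sum>k\<in>{1..K}. ln (s k (class_data (zip XT T) k)))"
    using s by (intro ln_prod_pos) blast
  also have "\<dots> = (\<Sum>k\<in>{1..K}. L k (class_data (zip XT T) k)) + (\<Sum>k\<in>{1..K}. R k (class_data (zip XT T) k))"
    unfolding sum.distrib[symmetric] using s by (intro sum.cong) blast+
  finally have sim: "ln (\<Prod>k\<in>{1..K}. s k (class_data (zip XT T) k))
      = (\<Sum>k\<in>{1..K}. L k (class_data (zip XT T) k)) + (\<Sum>k\<in>{1..K}. R k (class_data (zip XT T) k))" .
  have "ln (\<Prod>i<length XT. s (T ! i) [XT ! i]) = (\<Sum>i<length XT. ln (s (T ! i) [XT ! i]))"
    using s T by (intro ln_prod_pos) blast
  also have "\<dots> = (\<Sum>i<length XT. L (T ! i) [XT ! i]) + (\<Sum>i<length XT. R (T ! i) [XT ! i])"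
    unfolding sum.distrib[symmetric] using s T by (intro sum.cong) blast+
  finally have mar: "ln (\<Prod>i<length XT. s (T ! i) [XT ! i])
      = (\<Sum>i<length XT. L (T ! i) [XT ! i]) + (\<Sum>i<length XT. R (T ! i) [XT ! i])" .
  have "(\<Sum>k\<in>{1..K}. L k (class_data (zip XT T) k)) = (\<Sum>i<length XT. L (T ! i) [XT ! i])"
    using assms(1) labels nil app by (rule class_split)
  then show ?thesis unfolding sim mar by simp
qed

theorem theorem1:
  fixes \<Delta> :: "'v set" and kk :: "'v \<Rightarrow> nat" and K :: nat
    and E :: "nat \<Rightarrow> 'v set set" and Lst :: "nat \<Rightarrow> 'v set \<Rightarrow> 'v obs set"
    and cs :: "nat \<Rightarrow> 'v set list" and ord :: "nat \<Rightarrow> 'v set \<Rightarrow> 'v list"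
    and \<alpha> :: "nat \<Rightarrow> 'v set \<Rightarrow> nat \<Rightarrow> nat \<Rightarrow> nat list set \<Rightarrow> real"
    and XT :: "'v obs list" and T :: "nat list"
    and XR :: "nat \<Rightarrow> ('v obs \<times> nat) list"
  assumes "finite \<Delta>" and "K \<ge> 1" and "\<forall>v\<in>\<Delta>. 0 < kk v"
    and "\<forall>k\<in>{1..K}. decomposable_SG \<Delta> kk (E k) (Lst k) \<and> perfect_seq \<Delta> (E k) (cs k)"
    and "\<forall>k\<in>{1..K}. \<forall>F\<in>set (cs k) \<union> set (seps (cs k)). valid_order (E k) (Lst k) F (ord k F)"
    and "\<forall>k\<in>{1..K}. \<forall>F\<in>set (cs k) \<union> set (seps (cs k)). \<forall>j<length (ord k F).
           \<forall>i<kk (ord k F ! j). \<forall>Q\<in>groups \<Delta> (E k) (Lst k) kk (ord k F) j. 0 < \<alpha> k F j i Q"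
    and "length T = length XT" and "\<forall>t\<in>set T. t \<in> {1..K}"
    and "\<forall>x\<in>set XT. \<forall>v\<in>\<Delta>. x v < kk v"
    and "\<forall>N. \<forall>p\<in>set (XR N). (\<forall>v\<in>\<Delta>. fst p v < kk v) \<and> snd p \<in> {1..K}"
    and "\<forall>k\<in>{1..K}. \<forall>F\<in>set (cs k) \<union> set (seps (cs k)). \<forall>j<length (ord k F).
           \<forall>i<kk (ord k F ! j). \<forall>Q\<in>groups \<Delta> (E k) (Lst k) kk (ord k F) j.
             filterlim (\<lambda>N. cnti (ord k F) j (class_data (XR N) k) i Q) at_top sequentially"
  shows "(\<lambda>N. ln (P_sim K \<Delta> kk E Lst cs ord \<alpha> (XR N) XT T)
              - ln (P_mar \<Delta> kk E Lst cs ord \<alpha> (XR N) XT T)) \<longlonglongrightarrow> 0"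
proof -
  let ?rem = "\<lambda>N k. class_rem \<Delta> kk (E k) (Lst k) (cs k) (ord k) (\<alpha> k) (class_data (XR N) k)"
  have kpos: "\<forall>F\<in>set (cs k) \<union> set (seps (cs k)). \<forall>j<length (ord k F). 0 < kk (ord k F ! j)"
    if "k \<in> {1..K}" for k
    using assms(3,4,5) that by (intro factor_outcomes_pos) blast+
  have "ln (P_sim K \<Delta> kk E Lst cs ord \<alpha> (XR N) XT T) - ln (P_mar \<Delta> kk E Lst cs ord \<alpha> (XR N) XT T)
      = (\<Sum>k\<in>{1..K}. ?rem N k (class_data (zip XT T) k)) - (\<Sum>i<length XT. ?rem N (T ! i) [XT ! i])" for N
    unfolding P_sim_def P_mar_def using assms(7,8)
  proof (rule ln_sim_minus_mar)
    show "0 < class_score \<Delta> kk (E k) (Lst k) (cs k) (ord k) (\<alpha> k) (class_data (XR N) k) Ys \<and>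
          ln (class_score \<Delta> kk (E k) (Lst k) (cs k) (ord k) (\<alpha> k) (class_data (XR N) k) Ys)
          = class_loglin \<Delta> kk (E k) (Lst k) (cs k) (ord k) (\<alpha> k) (class_data (XR N) k) Ys + ?rem N k Ys"
      if "k \<in> {1..K}" for k Ys
      using ln_class_score[OF kpos[OF that]] assms(6) that by blast
  qed (simp_all add: class_loglin_Nil class_loglin_append)
  moreover have rem_lim: "(\<lambda>N. ?rem N k Ys) \<longlonglongrightarrow> 0" if "k \<in> {1..K}" for k Ys
    by (rule class_rem_tendsto) (use kpos[OF that] assms(6,11) that in blast)+
  have "T ! i \<in> {1..K}" if "i < length XT" for i
    using assms(7,8) that nth_mem by metis
  then have "(\<lambda>N. (\<Sum>k\<in>{1..K}. ?rem N k (class_data (zip XT T) k))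
                    - (\<Sum>i<length XT. ?rem N (T ! i) [XT ! i])) \<longlonglongrightarrow> 0 - 0"
    by (intro tendsto_diff tendsto_null_sum rem_lim) auto
  ultimately show ?thesis by simp
qed

end
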